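(* Let $S$ be a uniform line VN with vertices $1,2,\dots,n$ (edges $\{i,i+1\}$, all demands $1$) and let $T$ be a tree PN on $n$ vertices with nonnegative edge costs. For an embedding $f$, consider the closed-form walk $f(1)\to f(2)\to\cdots\to f(n)$ in $T$ obtained by concatenating the unique tree paths between consecutive images. If there exists an embedding of $S$ on $T$ of minimum cost, then there exists a minimum-cost embedding $g$ of $S$ on $T$ such that in the walk $g(1)\to g(2)\to\cdots\to g(n)$ every edge of $T$ is traversed at most once in each direction.
   Context: Model. A physical network (PN) is an undirected connected graph $G=(V_G,E_G)$ with an edge cost function $t:E_G\to\mathbb{R}_{\ge 0}$. A virtual network (VN) is an undirected connected graph $S=(V_S,E_S)$ with $|V_S|=|V_G|=n$ and a demand function $w:E_S\to\mathbb{N}$. An embedding $f$ of $S$ on $G$ consists of a bijection $f_V:V_S\to V_G$ together with, for every edge $e=\{i,j\}\in E_S$, a single path $f_E(e)$ in $G$ between $f_V(i)$ and $f_V(j)$ (in a tree this path is unique). The cost of a path is the sum of the costs $t$ of its edges, and $\mathrm{Cost}(f)=\sum_{e\in E_S} w_e\cdot \mathrm{cost}(f_E(e))$. A uniform line is a path graph with all demands equal to $1$. *)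

theory Defs
  imports Complex_Main
begin

(* Undirected simple graphs: vertex set V, edge set E of 2-element subsets of V. *)

definition is_walk :: "'v set set \<Rightarrow> 'v list \<Rightarrow> bool" where
  "is_walk E p \<longleftrightarrow> p \<noteq> [] \<and> (\<forall>k. Suc k < length p \<longrightarrow> {p!k, p!Suc k} \<in> E)"

definition is_path :: "'v set set \<Rightarrow> 'v list \<Rightarrow> bool" where
  "is_path E p \<longleftrightarrow> is_walk E p \<and> distinct p"

(* a cycle: closed walk with at least 3 distinct vertices, no repeated vertex except endpoints *)
definition is_cycle :: "'v set set \<Rightarrow> 'v list \<Rightarrow> bool" where
  "is_cycle E p \<longleftrightarrow> is_walk E p \<and> length p \<ge> 4 \<and> hd p = last p \<and> distinct (tl p)"

definition connected_graph :: "'v set \<Rightarrow> 'v set set \<Rightarrow> bool" where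
  "connected_graph V E \<longleftrightarrow>
     (\<forall>u\<in>V. \<forall>v\<in>V. \<exists>p. is_walk E p \<and> hd p = u \<and> last p = v)"

definition is_tree :: "'v set \<Rightarrow> 'v set set \<Rightarrow> bool" where
  "is_tree V E \<longleftrightarrow> finite V \<and> V \<noteq> {} \<and> (\<forall>e\<in>E. e \<subseteq> V \<and> card e = 2)
     \<and> connected_graph V E \<and> (\<nexists>p. is_cycle E p)"

definition tree_path :: "'v set set \<Rightarrow> 'v \<Rightarrow> 'v \<Rightarrow> 'v list" where
  "tree_path E u v = (THE p. is_path E p \<and> hd p = u \<and> last p = v)"

definition path_cost :: "('v set \<Rightarrow> real) \<Rightarrow> 'v list \<Rightarrow> real" where
  "path_cost t p = (\<Sum>k<length p - 1. t {p!k, p!Suc k})"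

definition line_embedding :: "'v set \<Rightarrow> (nat \<Rightarrow> 'v) \<Rightarrow> bool" where
  "line_embedding V f \<longleftrightarrow> bij_betw f {1..card V} V"

(* Cost(f) = sum over line edges {i,i+1} (demand 1) of cost of the tree path *)
definition line_cost :: "'v set \<Rightarrow> 'v set set \<Rightarrow> ('v set \<Rightarrow> real) \<Rightarrow> (nat \<Rightarrow> 'v) \<Rightarrow> real" where
  "line_cost V E t f = (\<Sum>i\<in>{1..<card V}. path_cost t (tree_path E (f i) (f (Suc i))))"

definition line_walk :: "'v set \<Rightarrow> 'v set set \<Rightarrow> (nat \<Rightarrow> 'v) \<Rightarrow> 'v list" where
  "line_walk V E f = f 1 # concat (map (\<lambda>i. tl (tree_path E (f i) (f (Suc i)))) [1..<card V])"

definition traversals :: "'v list \<Rightarrow> 'v \<Rightarrow> 'v \<Rightarrow> nat" where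
  "traversals w u v = card {k. Suc k < length w \<and> w!k = u \<and> w!Suc k = v}"

end

theory Submission
  imports Defs
begin

text \<open>
  An embedding of the line is an order \<open>xs\<close> of the vertices; its cost is the sum of the tree
  distances of consecutive vertices, and its walk traverses a tree edge from \<open>a\<close> to \<open>b\<close> once
  for every consecutive pair stepping from the \<open>a\<close>-side to the \<open>b\<close>-side of the edge.
  If an order has two such steps, it has the form \<open>P x B A s Q\<close> where \<open>x\<close>, \<open>hd A\<close>,
  \<open>last A\<close> lie on the \<open>a\<close>-side and \<open>s\<close>, \<open>hd B\<close>, \<open>last B\<close> on the \<open>b\<close>-side.
  Exchanging the blocks \<open>A\<close> and \<open>B\<close> turns three crossings into one and, by the triangle
  inequality, saves at least \<open>2 t {a, b}\<close>. Hence a cost-minimal order that in addition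
  minimises the number of tree edges traversed crosses every edge at most once in each direction.
\<close>

fun sum_consecutive :: "('a \<Rightarrow> 'a \<Rightarrow> 'b::comm_monoid_add) \<Rightarrow> 'a list \<Rightarrow> 'b" where
  "sum_consecutive f (x # y # r) = f x y + sum_consecutive f (y # r)"
| "sum_consecutive f _ = 0"

lemma sum_consecutive_append:
  "xs \<noteq> [] \<Longrightarrow> ys \<noteq> [] \<Longrightarrow>
   sum_consecutive f (xs @ ys) = sum_consecutive f xs + f (last xs) (hd ys) + sum_consecutive f ys"
proof (induction xs rule: induct_list012)
  case (2 x) then show ?case by (cases ys) auto
qed (auto simp: add.assoc)

lemma sum_consecutive_append_tl:
  assumes "xs \<noteq> []" "ys \<noteq> []" "last xs = hd ys"
  shows "sum_consecutive f (xs @ tl ys) = sum_consecutive f xs + sum_consecutive f ys"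
proof (cases ys rule: remdups_adj.cases)
  case (3 y z r)
  then show ?thesis using assms sum_consecutive_append[of xs "z # r" f] by (simp add: add.assoc)
qed (use assms in auto)

lemma sum_consecutive_rev:
  assumes "\<And>x y. f x y = f y x"
  shows "sum_consecutive f (rev xs) = sum_consecutive f xs"
proof (induction xs rule: induct_list012)
  case (3 x y r)
  then show ?case
    using sum_consecutive_append[of "rev (y # r)" "[x]" f] assms by (simp add: last_rev add.commute)
qed auto

lemma sum_consecutive_upt:
  "m \<le> k \<Longrightarrow> sum_consecutive f (map h [m..<Suc k]) = (\<Sum>i = m..<k. f (h i) (h (Suc i)))"
proof (induction k)
  case (Suc k)
  show ?case
  proof (cases "m = Suc k")
    case False
    then have "m \<le> k" using Suc.prems by simp
    then have "map h [m..<Suc (Suc k)] = map h [m..<Suc k] @ [h (Suc k)]" by simp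
    then show ?thesis
      using Suc.IH \<open>m \<le> k\<close> sum_consecutive_append[of "map h [m..<Suc k]" "[h (Suc k)]" f]
      by (simp add: last_map add.commute del: upt_Suc)
  qed simp
qed simp

lemma sum_consecutive_neq_0_obtain:
  "sum_consecutive f xs \<noteq> 0 \<Longrightarrow> \<exists>P x y Q. xs = P @ x # y # Q \<and> f x y \<noteq> 0"
proof (induction f xs rule: sum_consecutive.induct)
  case (1 f x y r)
  show ?case
  proof (cases "f x y = 0")
    case True
    then obtain P x' y' Q where "y # r = P @ x' # y' # Q" "f x' y' \<noteq> 0" using 1 by auto
    then show ?thesis by (metis append_Cons)
  qed (metis append_Nil)
qed auto

lemma sum_consecutive_conv_sum:
  "sum_consecutive f xs = (\<Sum>k<length xs - 1. f (xs ! k) (xs ! Suc k))"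
  by (induction f xs rule: sum_consecutive.induct)
     (simp_all add: sum.lessThan_Suc_shift del: sum.lessThan_Suc)

lemma last_append_tl: "p \<noteq> [] \<Longrightarrow> q \<noteq> [] \<Longrightarrow> last p = hd q \<Longrightarrow> last (p @ tl q) = last q"
  by (cases q) auto

lemma ascent_split:
  "xs \<noteq> [] \<Longrightarrow> \<not> P (hd xs) \<Longrightarrow> P (last xs) \<Longrightarrow>
   \<exists>B A. xs = B @ A \<and> B \<noteq> [] \<and> A \<noteq> [] \<and> \<not> P (last B) \<and> P (hd A)"
proof (induction xs rule: induct_list012)
  case (3 x y r)
  show ?case
  proof (cases "P y")
    case True
    then show ?thesis using "3.prems" by (intro exI[of _ "[x]"] exI[of _ "y # r"]) auto
  next
    case False
    then obtain B A where "y # r = B @ A" "B \<noteq> []" "A \<noteq> []" "\<not> P (last B)" "P (hd A)"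
      using "3.IH"(2) "3.prems" by auto
    then show ?thesis by (intro exI[of _ "x # B"] exI[of _ A]) auto
  qed
qed auto

lemma two_descents_obtain:
  assumes "sum_consecutive (\<lambda>x y. of_bool (P x \<and> \<not> P y)) xs \<ge> (2::nat)"
  shows "\<exists>Pre x B A s Q. xs = Pre @ x # B @ A @ s # Q \<and> P x \<and> \<not> P s \<and>
           B \<noteq> [] \<and> \<not> P (hd B) \<and> \<not> P (last B) \<and> A \<noteq> [] \<and> P (hd A) \<and> P (last A)"
  using assms
proof (induction xs rule: induct_list012)
  case (3 x y r)
  show ?case
  proof (cases "P x \<and> \<not> P y")
    case True
    then have "sum_consecutive (\<lambda>x y. of_bool (P x \<and> \<not> P y)) (y # r) \<noteq> (0::nat)"
      using "3.prems" by simp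
    then obtain M z s Q where yr: "y # r = M @ z # s # Q" "P z" "\<not> P s"
      using sum_consecutive_neq_0_obtain[of "\<lambda>x y. of_bool (P x \<and> \<not> P y)" "y # r"]
      by (auto split: if_splits)
    then have "M \<noteq> []" "hd M = y" using True by (cases M; auto)+
    then obtain B A where "M @ [z] = B @ A" "B \<noteq> []" "A \<noteq> []" "\<not> P (last B)" "P (hd A)"
      using ascent_split[of "M @ [z]" P] True \<open>P z\<close> by auto
    moreover from this have "hd B = y" "last A = z"
      using \<open>M \<noteq> []\<close> \<open>hd M = y\<close> by (metis hd_append2 last_appendR last_snoc)+
    ultimately show ?thesis using True yr
      by (intro exI[of _ "[]"] exI[of _ x] exI[of _ B] exI[of _ A] exI[of _ s] exI[of _ Q]) auto
  next
    case False
    then obtain Pre x' B A s Q where "y # r = Pre @ x' # B @ A @ s # Q" "P x'" "\<not> P s"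
        "B \<noteq> []" "\<not> P (hd B)" "\<not> P (last B)" "A \<noteq> []" "P (hd A)" "P (last A)"
      using "3.IH"(2) "3.prems" by auto
    then show ?thesis by (intro exI[of _ "x # Pre"]) auto
  qed
qed auto

lemma ex_lex_min:
  fixes f g :: "'a \<Rightarrow> 'b::linorder"
  assumes "finite S" "S \<noteq> {}"
  shows "\<exists>x\<in>S. (\<forall>y\<in>S. f x \<le> f y) \<and> (\<forall>y\<in>S. f y \<le> f x \<longrightarrow> g x \<le> g y)"
proof -
  define M where "M = {x\<in>S. \<forall>y\<in>S. f x \<le> f y}"
  have "arg_min_on f S \<in> M"
    unfolding M_def using arg_min_if_finite(1)[OF assms] arg_min_least[OF assms, of _ f] by blast
  then have "finite M" "M \<noteq> {}" using assms(1) by (auto simp: M_def)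
  then obtain x where x: "x \<in> M" "\<forall>y\<in>M. g x \<le> g y"
    using arg_min_if_finite(1)[of M g] arg_min_least[of M _ g] by blast
  have "y \<in> M" if "y \<in> S" "f y \<le> f x" for y
    using that x(1) unfolding M_def by (blast intro: order_trans)
  then show ?thesis using x unfolding M_def by blast
qed

lemma is_walk_singleton [simp]: "is_walk E [x]"
  by (simp add: is_walk_def)

lemma is_walk_Cons_Cons [simp]: "is_walk E (x # y # r) \<longleftrightarrow> {x, y} \<in> E \<and> is_walk E (y # r)"
  unfolding is_walk_def by (auto simp: nth_Cons split: nat.splits)

lemma is_walk_iff_successively: "is_walk E p \<longleftrightarrow> p \<noteq> [] \<and> successively (\<lambda>x y. {x, y} \<in> E) p"
  by (induction p rule: induct_list012) (auto, simp_all add: is_walk_def)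

lemma is_walk_append:
  "p \<noteq> [] \<Longrightarrow> q \<noteq> [] \<Longrightarrow> is_walk E (p @ q) \<longleftrightarrow> is_walk E p \<and> is_walk E q \<and> {last p, hd q} \<in> E"
  by (auto simp: is_walk_iff_successively successively_append_iff)

lemma is_walk_append_tl:
  "is_walk E p \<Longrightarrow> is_walk E q \<Longrightarrow> last p = hd q \<Longrightarrow> is_walk E (p @ tl q)"
  by (cases q) (auto simp: is_walk_iff_successively successively_append_iff successively_Cons)

lemma is_walk_appendD:
  assumes "is_walk E (p @ q)"
  shows "p \<noteq> [] \<Longrightarrow> is_walk E p" and "q \<noteq> [] \<Longrightarrow> is_walk E q"
  using assms by (auto simp: is_walk_iff_successively successively_append_iff)

lemma is_walk_rev [simp]: "is_walk E (rev p) \<longleftrightarrow> is_walk E p"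
  by (simp add: is_walk_iff_successively insert_commute)

lemma is_path_not_Nil: "is_path E p \<Longrightarrow> p \<noteq> []"
  by (simp add: is_path_def is_walk_def)

lemma path_cost_conv_sum_consecutive: "path_cost t p = sum_consecutive (\<lambda>x y. t {x, y}) p"
  by (simp add: path_cost_def sum_consecutive_conv_sum)

lemma path_cost_append_tl:
  "p \<noteq> [] \<Longrightarrow> q \<noteq> [] \<Longrightarrow> last p = hd q \<Longrightarrow> path_cost t (p @ tl q) = path_cost t p + path_cost t q"
  by (simp add: path_cost_conv_sum_consecutive sum_consecutive_append_tl)

lemma path_cost_append:
  "p \<noteq> [] \<Longrightarrow> q \<noteq> [] \<Longrightarrow> path_cost t (p @ q) = path_cost t p + t {last p, hd q} + path_cost t q"
  by (simp add: path_cost_conv_sum_consecutive sum_consecutive_append)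

lemma path_cost_rev [simp]: "path_cost t (rev p) = path_cost t p"
  unfolding path_cost_conv_sum_consecutive by (rule sum_consecutive_rev) (simp add: insert_commute)

lemma path_cost_nonneg: "is_walk E p \<Longrightarrow> \<forall>e\<in>E. 0 \<le> t e \<Longrightarrow> 0 \<le> path_cost t p"
  by (induction p rule: induct_list012) (auto simp: path_cost_conv_sum_consecutive)

lemma walk_shortcut_to_path:
  assumes "is_walk E w" "\<forall>e\<in>E. 0 \<le> t e"
  shows "\<exists>p. is_path E p \<and> hd p = hd w \<and> last p = last w \<and> path_cost t p \<le> path_cost t w"
  using assms(1)
proof (induction w rule: length_induct)
  case (1 w)
  show ?case
  proof (cases "distinct w")
    case True
    then show ?thesis using 1 by (auto simp: is_path_def)
  next
    case False
    then obtain xs y ys zs where w: "w = xs @ [y] @ ys @ [y] @ zs"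
      using not_distinct_decomp by blast
    have walks: "is_walk E (xs @ [y])" "is_walk E (y # ys @ [y])" "is_walk E (y # zs)"
      using is_walk_appendD[of E "xs @ [y]" "ys @ y # zs"]
        is_walk_appendD[of E xs "y # ys @ y # zs"] is_walk_appendD[of E "y # ys @ [y]" zs]
        is_walk_appendD[of E "xs @ y # ys" "y # zs"] "1.prems" w
      by auto
    define w' where "w' = (xs @ [y]) @ tl (y # zs)"
    have "is_walk E w'" unfolding w'_def using walks by (intro is_walk_append_tl) auto
    moreover have "length w' < length w" unfolding w'_def w by simp
    ultimately obtain p where p: "is_path E p" "hd p = hd w'" "last p = last w'"
        "path_cost t p \<le> path_cost t w'"
      using "1.IH" by blast
    have "w = ((xs @ [y]) @ tl (y # ys @ [y])) @ tl (y # zs)" using w by simp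
    also have "path_cost t \<dots> = path_cost t (xs @ [y]) + path_cost t (y # ys @ [y]) + path_cost t (y # zs)"
      using path_cost_append_tl[of "xs @ [y]" "y # ys @ [y]" t]
        path_cost_append_tl[of "xs @ y # ys @ [y]" "y # zs" t] by simp
    finally have "path_cost t w = \<dots>" .
    moreover have "path_cost t w' = path_cost t (xs @ [y]) + path_cost t (y # zs)"
      unfolding w'_def by (rule path_cost_append_tl) simp_all
    moreover have "0 \<le> path_cost t (y # ys @ [y])" using path_cost_nonneg walks(2) assms(2) by blast
    moreover have "hd w' = hd w" "last w' = last w" unfolding w'_def w by (cases xs; cases zs; simp)+
    ultimately show ?thesis using p by (intro exI[of _ p]) auto
  qed
qed

lemma is_cycle_of_disjoint_paths:
  assumes "is_path E (x # A @ [z])" "is_path E (x # C @ [z])"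
    and "set A \<inter> set C = {}" "A \<noteq> [] \<or> C \<noteq> []"
  shows "is_cycle E ((x # A @ [z]) @ tl (z # rev C @ [x]))"
proof -
  have "is_walk E (z # rev C @ [x])"
    using assms(2) is_walk_rev[of E "x # C @ [z]"] by (simp add: is_path_def)
  then have "is_walk E ((x # A @ [z]) @ tl (z # rev C @ [x]))"
    using assms(1) by (intro is_walk_append_tl) (auto simp: is_path_def)
  moreover have "length ((x # A @ [z]) @ tl (z # rev C @ [x])) \<ge> 4" using assms(4) by (auto simp: Suc_le_eq)
  moreover have "distinct (tl ((x # A @ [z]) @ tl (z # rev C @ [x])))"
    using assms(1-3) by (auto simp: is_path_def)
  ultimately show ?thesis by (simp add: is_cycle_def)
qed

lemma traversals_conv_sum_consecutive:
  "traversals w u v = sum_consecutive (\<lambda>x y. of_bool (x = u \<and> y = v)) w"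
proof -
  have "{k. Suc k < length w \<and> w ! k = u \<and> w ! Suc k = v}
      = {..<length w - 1} \<inter> {k. w ! k = u \<and> w ! Suc k = v}"
    by auto
  then show ?thesis by (simp add: traversals_def sum_consecutive_conv_sum)
qed

lemma traversals_append_tl:
  "p \<noteq> [] \<Longrightarrow> q \<noteq> [] \<Longrightarrow> last p = hd q \<Longrightarrow> traversals (p @ tl q) u v = traversals p u v + traversals q u v"
  by (simp add: traversals_conv_sum_consecutive sum_consecutive_append_tl)

lemma traversals_neq_0_obtain: "traversals w u v \<noteq> 0 \<Longrightarrow> \<exists>P Q. w = P @ u # v # Q"
  using sum_consecutive_neq_0_obtain[of "\<lambda>x y. of_bool (x = u \<and> y = v)" w]
  by (auto simp: traversals_conv_sum_consecutive)

lemma traversals_eq_0_if_notin: "u \<notin> set w \<Longrightarrow> traversals w u v = 0"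
  by (induction w rule: induct_list012) (auto simp: traversals_conv_sum_consecutive)

lemma traversals_le_1_if_distinct: "distinct w \<Longrightarrow> traversals w u v \<le> 1"
  by (induction w rule: induct_list012)
     (auto simp: traversals_conv_sum_consecutive traversals_eq_0_if_notin[unfolded traversals_conv_sum_consecutive])

definition vertex_orders :: "'v set \<Rightarrow> 'v list set" where
  "vertex_orders V = {xs. distinct xs \<and> set xs = V}"

lemma vertex_order_of_line_embedding:
  "line_embedding V h \<Longrightarrow> map h [1..<Suc (card V)] \<in> vertex_orders V"
  by (simp add: line_embedding_def vertex_orders_def bij_betw_def distinct_map
      atLeastLessThanSuc_atLeastAtMost del: upt_Suc)

lemma line_embedding_of_vertex_order:
  assumes "xs \<in> vertex_orders V"
  shows "line_embedding V (\<lambda>i. xs ! (i - 1))" and "map (\<lambda>i. xs ! (i - 1)) [1..<Suc (card V)] = xs"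
proof -
  have len: "length xs = card V" using assms distinct_card by (fastforce simp: vertex_orders_def)
  show map_eq: "map (\<lambda>i. xs ! (i - 1)) [1..<Suc (card V)] = xs"
    by (rule nth_equalityI) (simp_all add: len del: upt_Suc)
  have "inj_on (\<lambda>i. xs ! (i - 1)) {1..card V}"
    using assms len by (auto simp: inj_on_def vertex_orders_def nth_eq_iff_index_eq)
  moreover have "(\<lambda>i. xs ! (i - 1)) ` {1..card V} = V"
    using arg_cong[OF map_eq, of set] assms
    by (simp add: vertex_orders_def atLeastLessThanSuc_atLeastAtMost del: upt_Suc)
  ultimately show "line_embedding V (\<lambda>i. xs ! (i - 1))"
    by (simp add: line_embedding_def bij_betw_def)
qed

definition tree_walk :: "'v set set \<Rightarrow> 'v list \<Rightarrow> 'v list" where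
  "tree_walk E xs = hd xs # concat (map (\<lambda>(u, v). tl (tree_path E u v)) (zip xs (tl xs)))"

section \<open>Paths in a tree\<close>

locale tree =
  fixes V :: "'v set" and E :: "'v set set"
  assumes is_tree: "is_tree V E"
begin

lemma finite_V: "finite V" and V_not_empty: "V \<noteq> {}"
  using is_tree by (auto simp: is_tree_def)

lemma card_V_ge_1: "card V \<ge> 1"
  using finite_V V_not_empty by (simp add: Suc_le_eq card_gt_0_iff)

lemma edge_endpoints: "{u, v} \<in> E \<Longrightarrow> u \<in> V \<and> v \<in> V \<and> u \<noteq> v"
  using is_tree unfolding is_tree_def by (cases "u = v") auto

lemma walk_subset_V: "is_walk E p \<Longrightarrow> hd p \<in> V \<Longrightarrow> set p \<subseteq> V"
  by (induction p rule: induct_list012) (auto dest: edge_endpoints)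

lemma path_unique:
  "is_path E p \<Longrightarrow> is_path E q \<Longrightarrow> hd p = hd q \<Longrightarrow> last p = last q \<Longrightarrow> p = q"
proof (induction p arbitrary: q)
  case Nil
  then show ?case using is_path_not_Nil by blast
next
  case (Cons x p)
  obtain q' where q: "q = x # q'"
    using Cons.prems(2,3) is_path_not_Nil by (cases q) auto
  show ?case
  proof (cases "p = []")
    case True
    then show ?thesis using Cons.prems q by (cases q') (auto simp: is_path_def split: if_splits)
  next
    case False
    have "last p \<noteq> x" using Cons.prems(1) False by (auto simp: is_path_def)
    then have "q' \<noteq> []" "last q' = last p" using Cons.prems(4) q False by auto
    have paths: "is_path E p" "is_path E q'"
      using Cons.prems(1,2) q False \<open>q' \<noteq> []\<close>
      by (auto simp: is_path_def is_walk_appendD(2)[of E "[x]"])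
    show ?thesis
    proof (cases "hd p = hd q'")
      case True
      then show ?thesis using Cons.IH[OF paths(1) paths(2)] \<open>last q' = last p\<close> q by simp
    next
      case False
      have "\<exists>y\<in>set p. y \<in> set q'"
        using \<open>p \<noteq> []\<close> \<open>q' \<noteq> []\<close> \<open>last q' = last p\<close> by (metis last_in_set)
      txt \<open>Cutting \<open>p\<close> at its first vertex on \<open>q'\<close> closes a cycle.\<close>
      then obtain A z B where p: "p = A @ z # B" and "z \<in> set q'" and A: "\<forall>y\<in>set A. y \<notin> set q'"
        using split_list_first_prop[of p "\<lambda>y. y \<in> set q'"] by blast
      then obtain C D where q': "q' = C @ z # D" by (meson split_list)
      have "is_path E (x # A @ [z])" "is_path E (x # C @ [z])"
        using Cons.prems(1,2) q p q' is_walk_appendD(1)[of E "x # A @ [z]" B]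
          is_walk_appendD(1)[of E "x # C @ [z]" D]
        by (auto simp: is_path_def)
      moreover have "set A \<inter> set C = {}" "A \<noteq> [] \<or> C \<noteq> []"
        using A q' p False by auto
      ultimately have "is_cycle E ((x # A @ [z]) @ tl (z # rev C @ [x]))"
        by (rule is_cycle_of_disjoint_paths)
      then show ?thesis using is_tree by (auto simp: is_tree_def)
    qed
  qed
qed

lemma tree_path_eq: "is_path E p \<Longrightarrow> tree_path E (hd p) (last p) = p"
  unfolding tree_path_def by (rule the_equality) (auto intro: path_unique)

lemma is_path_tree_path:
  assumes "x \<in> V" "y \<in> V"
  shows "is_path E (tree_path E x y)" "hd (tree_path E x y) = x" "last (tree_path E x y) = y"
proof -
  obtain w where "is_walk E w" "hd w = x" "last w = y"
    using assms is_tree unfolding is_tree_def connected_graph_def by blast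
  then obtain p where "is_path E p" "hd p = x" "last p = y"
    using walk_shortcut_to_path[of E w "\<lambda>_. 0"] by auto
  then show "is_path E (tree_path E x y)" "hd (tree_path E x y) = x" "last (tree_path E x y) = y"
    using tree_path_eq by metis+
qed

lemma tree_path_not_Nil: "x \<in> V \<Longrightarrow> y \<in> V \<Longrightarrow> tree_path E x y \<noteq> []"
  using is_path_not_Nil is_path_tree_path by blast

lemma tree_path_subset_V: "x \<in> V \<Longrightarrow> y \<in> V \<Longrightarrow> set (tree_path E x y) \<subseteq> V"
  using walk_subset_V is_path_tree_path by (metis is_path_def)

lemma tree_path_rev: "x \<in> V \<Longrightarrow> y \<in> V \<Longrightarrow> tree_path E y x = rev (tree_path E x y)"
  using is_path_tree_path[of x y] tree_path_not_Nil[of x y] tree_path_eq[of "rev (tree_path E x y)"]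
  by (simp add: is_path_def hd_rev last_rev)

lemma tree_path_split:
  assumes "x \<in> V" "y \<in> V" "tree_path E x y = P @ z # Q"
  shows "tree_path E x z = P @ [z]" "tree_path E z y = z # Q"
proof -
  have "is_path E (P @ [z])" "is_path E (z # Q)"
    using is_path_tree_path(1)[OF assms(1,2)] is_walk_appendD[of E "P @ [z]" Q]
      is_walk_appendD[of E P "z # Q"]
    by (auto simp: is_path_def assms(3))
  moreover have "hd (P @ [z]) = x" "last (z # Q) = y"
    using is_path_tree_path(2,3)[OF assms(1,2)] by (auto simp: assms(3) hd_append)
  ultimately show "tree_path E x z = P @ [z]" "tree_path E z y = z # Q"
    using tree_path_eq by fastforce+
qed

definition tree_dist :: "('v set \<Rightarrow> real) \<Rightarrow> 'v \<Rightarrow> 'v \<Rightarrow> real" where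
  "tree_dist t x y = path_cost t (tree_path E x y)"

lemma tree_dist_commute: "x \<in> V \<Longrightarrow> y \<in> V \<Longrightarrow> tree_dist t x y = tree_dist t y x"
  by (simp add: tree_dist_def tree_path_rev[of x y])

lemma tree_dist_triangle:
  assumes "\<forall>e\<in>E. 0 \<le> t e" "x \<in> V" "y \<in> V" "z \<in> V"
  shows "tree_dist t x z \<le> tree_dist t x y + tree_dist t y z"
proof -
  let ?w = "tree_path E x y @ tl (tree_path E y z)"
  have "is_walk E ?w"
    using is_path_tree_path assms by (intro is_walk_append_tl) (auto simp: is_path_def)
  then obtain p where p: "is_path E p" "hd p = hd ?w" "last p = last ?w" "path_cost t p \<le> path_cost t ?w"
    using walk_shortcut_to_path assms(1) by blast
  have "hd ?w = x" "last ?w = z"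
    using is_path_tree_path[OF assms(2,3)] is_path_tree_path[OF assms(3,4)]
      tree_path_not_Nil[OF assms(2,3)] tree_path_not_Nil[OF assms(3,4)]
    by (auto simp: last_append_tl)
  then have "tree_path E x z = p" using p tree_path_eq by metis
  moreover have "path_cost t ?w = tree_dist t x y + tree_dist t y z"
    unfolding tree_dist_def using assms is_path_tree_path
    by (intro path_cost_append_tl tree_path_not_Nil) auto
  ultimately show ?thesis using p unfolding tree_dist_def by simp
qed

lemma tree_walk_Cons_Cons:
  assumes "x \<in> V" "y \<in> V"
  shows "tree_walk E (x # y # r) = tree_path E x y @ tl (tree_walk E (y # r))"
proof -
  have "tree_walk E (x # y # r) = (x # tl (tree_path E x y)) @ tl (tree_walk E (y # r))"
    by (simp add: tree_walk_def)
  moreover have "x # tl (tree_path E x y) = tree_path E x y"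
    using is_path_tree_path(2)[OF assms] tree_path_not_Nil[OF assms] by (metis list.collapse)
  ultimately show ?thesis by simp
qed

definition order_cost :: "('v set \<Rightarrow> real) \<Rightarrow> 'v list \<Rightarrow> real" where
  "order_cost t = sum_consecutive (tree_dist t)"

lemma line_cost_conv_order_cost: "line_cost V E t h = order_cost t (map h [1..<Suc (card V)])"
  using sum_consecutive_upt[OF card_V_ge_1, of "tree_dist t" h]
  by (simp add: line_cost_def order_cost_def tree_dist_def del: upt_Suc)

lemma line_walk_conv_tree_walk: "line_walk V E h = tree_walk E (map h [1..<Suc (card V)])"
proof -
  have "zip (map h [1..<Suc (card V)]) (tl (map h [1..<Suc (card V)]))
      = map (\<lambda>i. (h i, h (Suc i))) [1..<card V]"
    by (rule nth_equalityI) (simp_all add: map_tl[symmetric] nth_tl del: upt_Suc)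
  moreover have "hd (map h [1..<Suc (card V)]) = h 1" using card_V_ge_1 by (simp add: hd_map del: upt_Suc)
  ultimately show ?thesis by (simp add: line_walk_def tree_walk_def comp_def del: upt_Suc)
qed

end

section \<open>The two sides of a tree edge\<close>

locale tree_edge = tree V E for V :: "'v set" and E +
  fixes a b :: 'v
  assumes edge: "{a, b} \<in> E"
begin

lemma a_in_V: "a \<in> V" and b_in_V: "b \<in> V" and a_neq_b: "a \<noteq> b"
  using edge_endpoints[OF edge] by auto

text \<open>\<open>x\<close> lies in the component of \<open>T - {a, b}\<close> containing \<open>a\<close>.\<close>

definition on_a_side :: "'v \<Rightarrow> bool" where
  "on_a_side x \<longleftrightarrow> b \<notin> set (tree_path E x a)"

lemma tree_path_to_other_end:
  assumes "x \<in> V"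
  shows "on_a_side x \<Longrightarrow> tree_path E x b = tree_path E x a @ [b]"
    and "\<not> on_a_side x \<Longrightarrow> tree_path E x a = tree_path E x b @ [a]"
proof -
  note xa = is_path_tree_path[OF assms a_in_V] tree_path_not_Nil[OF assms a_in_V]
  show "tree_path E x b = tree_path E x a @ [b]" if "on_a_side x"
  proof -
    have "is_path E (tree_path E x a @ [b])"
      using xa that edge by (auto simp: is_path_def is_walk_append on_a_side_def)
    then show ?thesis using tree_path_eq xa by fastforce
  qed
  show "tree_path E x a = tree_path E x b @ [a]" if b_side: "\<not> on_a_side x"
  proof -
    obtain P Q where PQ: "tree_path E x a = P @ b # Q"
      using b_side by (meson on_a_side_def split_list)
    have "is_path E [b, a]" using edge a_neq_b by (simp add: is_path_def insert_commute)
    then have "tree_path E b a = [b, a]" using tree_path_eq by fastforce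
    then show ?thesis using tree_path_split[OF assms a_in_V PQ] PQ by simp
  qed
qed

lemma a_in_tree_path_iff: "x \<in> V \<Longrightarrow> a \<in> set (tree_path E x b) \<longleftrightarrow> on_a_side x"
  using tree_path_to_other_end[of x] is_path_tree_path[of x a] is_path_tree_path[of x b]
    tree_path_not_Nil[of x a] a_in_V b_in_V
  by (cases "on_a_side x") (auto simp: is_path_def dest: last_in_set)

lemma on_a_side_tree_path:
  assumes "x \<in> V" "z \<in> set (tree_path E x a)" "on_a_side x"
  shows "on_a_side z"
proof -
  obtain P Q where PQ: "tree_path E x a = P @ z # Q" using assms(2) by (meson split_list)
  then have "tree_path E z a = z # Q" by (rule tree_path_split(2)[OF assms(1) a_in_V])
  then show ?thesis using PQ assms(3) by (simp add: on_a_side_def)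
qed

lemma not_on_a_side_tree_path:
  assumes "y \<in> V" "z \<in> set (tree_path E y b)" "\<not> on_a_side y"
  shows "\<not> on_a_side z"
proof -
  obtain P Q where PQ: "tree_path E y b = P @ z # Q" using assms(2) by (meson split_list)
  then have "tree_path E z b = z # Q" by (rule tree_path_split(2)[OF assms(1) b_in_V])
  moreover have "a \<notin> set (tree_path E y b)" using a_in_tree_path_iff[OF assms(1)] assms(3) by simp
  moreover have "z \<in> V" using tree_path_subset_V[OF assms(1) b_in_V] assms(2) by blast
  ultimately show ?thesis using PQ a_in_tree_path_iff[of z] by simp
qed

lemma tree_path_across:
  assumes "x \<in> V" "y \<in> V" "on_a_side x" "\<not> on_a_side y"
  shows "tree_path E x y = tree_path E x a @ tree_path E b y"
proof -
  note xa = is_path_tree_path[OF assms(1) a_in_V] tree_path_not_Nil[OF assms(1) a_in_V]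
  note by_ = is_path_tree_path[OF b_in_V assms(2)] tree_path_not_Nil[OF b_in_V assms(2)]
  have "\<not> on_a_side z" if "z \<in> set (tree_path E b y)" for z
    using not_on_a_side_tree_path[OF assms(2) _ assms(4)] that tree_path_rev[OF assms(2) b_in_V]
    by simp
  then have "set (tree_path E x a) \<inter> set (tree_path E b y) = {}"
    using on_a_side_tree_path[OF assms(1) _ assms(3)] by blast
  then have "is_path E (tree_path E x a @ tree_path E b y)"
    using xa by_ edge by (simp add: is_path_def is_walk_append)
  moreover have "hd (tree_path E x a @ tree_path E b y) = x" "last (tree_path E x a @ tree_path E b y) = y"
    using xa by_ by simp_all
  ultimately show ?thesis using tree_path_eq by metis
qed

lemma tree_dist_across:
  "x \<in> V \<Longrightarrow> y \<in> V \<Longrightarrow> on_a_side x \<Longrightarrow> \<not> on_a_side y \<Longrightarrow>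
   tree_dist t x y = tree_dist t x a + t {a, b} + tree_dist t b y"
  using tree_path_across is_path_tree_path tree_path_not_Nil a_in_V b_in_V
  by (simp add: tree_dist_def path_cost_append)

lemma traversals_tree_path_le:
  assumes "x \<in> V" "y \<in> V"
  shows "traversals (tree_path E x y) a b \<le> of_bool (on_a_side x \<and> \<not> on_a_side y)"
proof (cases "traversals (tree_path E x y) a b = 0")
  case False
  then obtain P Q where PQ: "tree_path E x y = P @ a # b # Q"
    using traversals_neq_0_obtain[OF False] by blast
  have dist: "distinct (tree_path E x y)" using is_path_tree_path[OF assms] by (simp add: is_path_def)
  have "tree_path E x a = P @ [a]" using tree_path_split(1)[OF assms PQ] .
  then have "on_a_side x" using dist PQ by (auto simp: on_a_side_def)
  moreover have "tree_path E b y = b # Q" using tree_path_split(2)[OF assms, of "P @ [a]"] PQ by simp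
  then have "\<not> on_a_side y"
    using dist PQ a_in_tree_path_iff[OF assms(2)] tree_path_rev[OF b_in_V assms(2)] by auto
  ultimately show ?thesis using traversals_le_1_if_distinct[OF dist] by simp
qed simp

definition crossings :: "'v list \<Rightarrow> nat" where
  "crossings = sum_consecutive (\<lambda>x y. of_bool (on_a_side x \<and> \<not> on_a_side y))"

lemma traversals_tree_walk_le: "set xs \<subseteq> V \<Longrightarrow> traversals (tree_walk E xs) a b \<le> crossings xs"
proof (induction xs rule: induct_list012)
  case (3 x y r)
  have xy: "x \<in> V" "y \<in> V" using "3.prems" by auto
  have "traversals (tree_walk E (x # y # r)) a b
      = traversals (tree_path E x y) a b + traversals (tree_walk E (y # r)) a b"
    unfolding tree_walk_Cons_Cons[OF xy] using is_path_tree_path[OF xy] tree_path_not_Nil[OF xy]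
    by (intro traversals_append_tl) (auto simp: tree_walk_def)
  also have "\<dots> \<le> of_bool (on_a_side x \<and> \<not> on_a_side y) + crossings (y # r)"
    using traversals_tree_path_le[OF xy] "3.IH"(2) "3.prems" by (intro add_mono) auto
  finally show ?case by (simp add: crossings_def)
qed (simp_all add: tree_walk_def traversals_def)

text \<open>
  The crossings \<open>x \<rightarrow> hd B\<close>, \<open>last B \<rightarrow> hd A\<close>, \<open>last A \<rightarrow> s\<close> are replaced by the single
  crossing \<open>last A \<rightarrow> hd B\<close>; the new steps \<open>x \<rightarrow> hd A\<close> and \<open>last B \<rightarrow> s\<close> are bounded by
  the triangle inequality through \<open>a\<close> and \<open>b\<close>.
\<close>

lemma order_cost_exchange:
  assumes nonneg: "\<forall>e\<in>E. 0 \<le> t e" and in_V: "set (P @ x # B @ A @ s # Q) \<subseteq> V"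
    and sides: "on_a_side x" "\<not> on_a_side s"
    and B: "B \<noteq> []" "\<not> on_a_side (hd B)" "\<not> on_a_side (last B)"
    and A: "A \<noteq> []" "on_a_side (hd A)" "on_a_side (last A)"
  shows "order_cost t (P @ x # A @ B @ s # Q) + 2 * t {a, b} \<le> order_cost t (P @ x # B @ A @ s # Q)"
proof -
  let ?d = "tree_dist t"
  have V: "x \<in> V" "hd B \<in> V" "last B \<in> V" "hd A \<in> V" "last A \<in> V" "s \<in> V"
    using in_V A B by auto
  have old: "order_cost t (P @ x # B @ A @ s # Q) = order_cost t (P @ [x]) + ?d x (hd B)
      + order_cost t B + ?d (last B) (hd A) + order_cost t A + ?d (last A) s + order_cost t (s # Q)"
    using sum_consecutive_append[of "P @ [x]" "B @ A @ s # Q" "?d"]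
      sum_consecutive_append[of B "A @ s # Q" "?d"] sum_consecutive_append[of A "s # Q" "?d"] A B
    by (simp add: order_cost_def)
  have new: "order_cost t (P @ x # A @ B @ s # Q) = order_cost t (P @ [x]) + ?d x (hd A)
      + order_cost t A + ?d (last A) (hd B) + order_cost t B + ?d (last B) s + order_cost t (s # Q)"
    using sum_consecutive_append[of "P @ [x]" "A @ B @ s # Q" "?d"]
      sum_consecutive_append[of A "B @ s # Q" "?d"] sum_consecutive_append[of B "s # Q" "?d"] A B
    by (simp add: order_cost_def)
  have "?d x (hd B) = ?d x a + t {a, b} + ?d b (hd B)"
    "?d (last A) s = ?d (last A) a + t {a, b} + ?d b s"
    "?d (last A) (hd B) = ?d (last A) a + t {a, b} + ?d b (hd B)"
    using tree_dist_across V A B sides by simp_all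
  moreover have "?d (last B) (hd A) = ?d (hd A) a + t {a, b} + ?d b (last B)"
    using tree_dist_across[of "hd A" "last B" t] tree_dist_commute V A B by simp
  moreover have "?d x (hd A) \<le> ?d x a + ?d (hd A) a" "?d (last B) s \<le> ?d b (last B) + ?d b s"
    using tree_dist_triangle[OF nonneg] tree_dist_commute V a_in_V b_in_V by metis+
  ultimately show ?thesis using old new by linarith
qed

text \<open>
  The exchange saves \<open>2 t {a, b}\<close>, which may be \<open>0\<close>; the tie-break by the number of tree
  edges traversed (cost with unit weights) makes the saving strict.
\<close>

lemma crossings_le_1_if_lex_minimal:
  assumes nonneg: "\<forall>e\<in>E. 0 \<le> t e" and xs: "xs \<in> vertex_orders V"
    and cost_min: "\<forall>ys\<in>vertex_orders V. order_cost t xs \<le> order_cost t ys"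
    and hops_min: "\<forall>ys\<in>vertex_orders V. order_cost t ys \<le> order_cost t xs \<longrightarrow>
                     order_cost (\<lambda>_. 1) xs \<le> order_cost (\<lambda>_. 1) ys"
  shows "crossings xs \<le> 1"
proof (rule ccontr)
  assume "\<not> crossings xs \<le> 1"
  then obtain P x B A s Q where xs_eq: "xs = P @ x # B @ A @ s # Q" and sides: "on_a_side x" "\<not> on_a_side s"
    and B: "B \<noteq> []" "\<not> on_a_side (hd B)" "\<not> on_a_side (last B)"
    and A: "A \<noteq> []" "on_a_side (hd A)" "on_a_side (last A)"
    using two_descents_obtain[of on_a_side xs] by (auto simp: crossings_def)
  define ys where "ys = P @ x # A @ B @ s # Q"
  have "set (P @ x # B @ A @ s # Q) \<subseteq> V" using xs xs_eq by (simp add: vertex_orders_def)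
  note exchange = order_cost_exchange[OF _ this sides B A, folded xs_eq ys_def]
  have "ys \<in> vertex_orders V" using xs unfolding xs_eq ys_def vertex_orders_def by auto
  moreover have "order_cost t ys \<le> order_cost t xs"
    using exchange[OF nonneg] nonneg edge by fastforce
  moreover have "order_cost (\<lambda>_. 1) ys + 2 \<le> order_cost (\<lambda>_. 1) xs"
    using exchange[of "\<lambda>_. 1"] by simp
  ultimately show False using hops_min by fastforce
qed

end

context tree
begin

lemma ex_optimal_order_traversing_edges_once:
  assumes nonneg: "\<forall>e\<in>E. 0 \<le> t e"
  shows "\<exists>xs\<in>vertex_orders V. (\<forall>ys\<in>vertex_orders V. order_cost t xs \<le> order_cost t ys) \<and>
           (\<forall>u v. {u, v} \<in> E \<longrightarrow> traversals (tree_walk E xs) u v \<le> 1)"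
proof -
  have "finite (vertex_orders V)"
    using finite_subset_distinct[OF finite_V] by (rule rev_finite_subset) (auto simp: vertex_orders_def)
  moreover have "vertex_orders V \<noteq> {}"
    using finite_distinct_list[OF finite_V] by (auto simp: vertex_orders_def)
  ultimately obtain xs where xs: "xs \<in> vertex_orders V"
    and cost_min: "\<forall>ys\<in>vertex_orders V. order_cost t xs \<le> order_cost t ys"
    and hops_min: "\<forall>ys\<in>vertex_orders V. order_cost t ys \<le> order_cost t xs \<longrightarrow>
                     order_cost (\<lambda>_. 1) xs \<le> order_cost (\<lambda>_. 1) ys"
    using ex_lex_min[of "vertex_orders V" "order_cost t" "order_cost (\<lambda>_. 1)"] by blast
  have "traversals (tree_walk E xs) u v \<le> 1" if "{u, v} \<in> E" for u v
  proof -
    interpret tree_edge V E u v using that by unfold_locales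
    have "set xs \<subseteq> V" using xs by (simp add: vertex_orders_def)
    then show ?thesis
      using traversals_tree_walk_le crossings_le_1_if_lex_minimal[OF nonneg xs cost_min hops_min]
      by (meson order_trans)
  qed
  then show ?thesis using xs cost_min by blast
qed

end

theorem lemma2:
  fixes V :: "'v set" and E :: "'v set set" and t :: "'v set \<Rightarrow> real"
  assumes tree: "is_tree V E"
    and nonneg: "\<forall>e\<in>E. t e \<ge> 0"
    and exmin: "\<exists>f. line_embedding V f \<and>
                   (\<forall>h. line_embedding V h \<longrightarrow> line_cost V E t f \<le> line_cost V E t h)"
  shows "\<exists>g. line_embedding V g \<and>
              (\<forall>h. line_embedding V h \<longrightarrow> line_cost V E t g \<le> line_cost V E t h) \<and>
              (\<forall>u v. {u, v} \<in> E \<longrightarrow> traversals (line_walk V E g) u v \<le> 1)"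
proof -
  interpret tree V E using tree by unfold_locales
  obtain xs where xs: "xs \<in> vertex_orders V"
    and cost_min: "\<forall>ys\<in>vertex_orders V. order_cost t xs \<le> order_cost t ys"
    and once: "\<forall>u v. {u, v} \<in> E \<longrightarrow> traversals (tree_walk E xs) u v \<le> 1"
    using ex_optimal_order_traversing_edges_once nonneg by blast
  define g where "g i = xs ! (i - 1)" for i
  have g: "line_embedding V g" "map g [1..<Suc (card V)] = xs"
    using line_embedding_of_vertex_order[OF xs] unfolding g_def by blast+
  have "line_cost V E t g \<le> line_cost V E t h" if "line_embedding V h" for h
    using cost_min vertex_order_of_line_embedding[OF that] g(2)
    by (simp add: line_cost_conv_order_cost del: upt_Suc)
  then show ?thesis using g once by (auto simp: line_walk_conv_tree_walk simp del: upt_Suc)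
qed

end
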